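(* Let $\beta^*_{\mathrm{CW}}(p)=\sup\{\beta\ge0:\sup_{t\in[0,1]}(\beta t^p-I(t))=0\}$ for integers $p\ge2$. Then (1) $\lim_{p\to\infty}\beta^*_{\mathrm{CW}}(p)=\log2$; (2) the sequence $\{\beta^*_{\mathrm{CW}}(p)\}_{p\ge2}$ is strictly increasing; (3) $\beta^*_{\mathrm{CW}}(2)=1/2$.
   Context: $I(t)=\frac12[(1+t)\log(1+t)+(1-t)\log(1-t)]$ for $t\in[0,1]$ (with $0\log0=0$). *)

theory Defs
  imports "HOL-Analysis.Analysis"
begin

definition xlogx :: "real \<Rightarrow> real" where
  "xlogx x = (if x = 0 then 0 else x * ln x)"

definition I_rate :: "real \<Rightarrow> real" where
  "I_rate t = (xlogx (1 + t) + xlogx (1 - t)) / 2"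

definition beta_CW :: "nat \<Rightarrow> real" where
  "beta_CW p = Sup {\<beta>::real. \<beta> \<ge> 0 \<and> (SUP t\<in>{0..1::real}. \<beta> * t ^ p - I_rate t) = 0}"

end

theory Submission
  imports Defs "HOL-Real_Asymp.Real_Asymp"
begin

text \<open>
  By definition beta_CW p is the largest \<beta> \<ge> 0 with \<beta> t^p \<le> I(t) on [0,1].
  The rate function I increases from 0 to ln 2, has derivative artanh t and satisfies
  I(t) \<ge> t^2/2 with I(t)/t^2 \<rightarrow> 1/2 at 0; this gives beta_CW 2 = 1/2.
  Near t = 1, I(1 - d) falls short of ln 2 by about (d/2) ln(2/d), more than the loss
  p d ln 2 in (1 - d)^p, so beta_CW p < ln 2. Since I is increasing, a constant c \<le> I(t0)
  is admissible as soon as c t^p \<le> I(t) holds on [0, t0]. For p \<ge> N + 2 and t \<le> t0 with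
  t0^N < 1/2 the term t^p is below t^2/2, so I(t0) is admissible, whence the limit ln 2;
  and min (I(t0)) (beta_CW p / t0) with I(t0) > beta_CW p is admissible for p + 1.
\<close>

lemma I_rate_0 [simp]: "I_rate 0 = 0"
  by (simp add: I_rate_def xlogx_def)

lemma I_rate_1 [simp]: "I_rate 1 = ln 2"
  by (simp add: I_rate_def xlogx_def)

lemma I_rate_eq:
  assumes "\<bar>t\<bar> < 1"
  shows "I_rate t = ((1 + t) * ln (1 + t) + (1 - t) * ln (1 - t)) / 2"
  using assms by (simp add: I_rate_def xlogx_def)

lemma I_rate_has_real_derivative:
  fixes t :: real
  assumes "\<bar>t\<bar> < 1"
  shows "(I_rate has_real_derivative artanh t) (at t)"
proof (rule has_field_derivative_transform_within_open[where S = "{-1<..<1}"])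
  have artanh_eq: "(ln (1 + t) - ln (1 - t)) / 2 = artanh t"
    using assms by (simp add: artanh_def ln_div abs_less_iff)
  show "((\<lambda>t. ((1 + t) * ln (1 + t) + (1 - t) * ln (1 - t)) / 2)
      has_real_derivative artanh t) (at t)"
    unfolding artanh_eq[symmetric] using assms
    by (auto intro!: derivative_eq_intros simp: divide_simps)
qed (use assms in \<open>auto simp: I_rate_eq\<close>)

lemma artanh_ge_self:
  fixes t :: real
  assumes "0 \<le> t" "t < 1"
  shows "t \<le> artanh t"
proof -
  have "artanh 0 - 0 \<le> artanh t - t"
  proof (rule DERIV_nonneg_imp_nondecreasing[OF assms(1)])
    fix x :: real assume x: "0 \<le> x" "x \<le> t"
    then have "((\<lambda>x. artanh x - x) has_real_derivative 1 / (1 - x^2) - 1) (at x)"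
      using assms by (auto intro!: derivative_eq_intros)
    moreover have "0 \<le> 1 / (1 - x^2) - 1"
    proof -
      have "0 < 1 - x^2" "1 - x^2 \<le> 1"
        using x assms by (auto simp: abs_square_less_1)
      then show ?thesis by (simp add: le_divide_eq)
    qed
    ultimately show "\<exists>y. ((\<lambda>x. artanh x - x) has_real_derivative y) (at x) \<and> 0 \<le> y"
      by blast
  qed
  then show ?thesis by simp
qed

lemma I_rate_ge_half_square:
  assumes "0 \<le> t" "t \<le> 1"
  shows "t^2 / 2 \<le> I_rate t"
proof (cases "t = 1")
  case True
  have "ln (1/2 :: real) \<le> 1/2 - 1"
    by (rule ln_le_minus_one) simp
  then show ?thesis
    using True by (simp add: ln_div)
next
  case False
  have "I_rate 0 - 0^2 / 2 \<le> I_rate t - t^2 / 2"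
  proof (rule DERIV_nonneg_imp_nondecreasing[OF assms(1)])
    fix x :: real assume x: "0 \<le> x" "x \<le> t"
    then have "((\<lambda>x. I_rate x - x^2 / 2) has_real_derivative artanh x - x) (at x)"
      using assms False by (auto intro!: derivative_eq_intros I_rate_has_real_derivative)
    moreover have "0 \<le> artanh x - x"
      using artanh_ge_self[of x] x assms False by simp
    ultimately show "\<exists>y. ((\<lambda>x. I_rate x - x^2 / 2) has_real_derivative y) (at x) \<and> 0 \<le> y"
      by blast
  qed
  then show ?thesis by simp
qed

lemma I_rate_nonneg: "0 \<le> t \<Longrightarrow> t \<le> 1 \<Longrightarrow> 0 \<le> I_rate t"
  by (rule order_trans[OF _ I_rate_ge_half_square]) simp_all

lemma I_rate_one_minus_le:
  assumes "0 < d" "d \<le> 1"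
  shows "I_rate (1 - d) \<le> ln 2 - d / 2 * ln (2 / d)"
proof -
  have "I_rate (1 - d) = ((2 - d) * ln (2 - d) + d * ln d) / 2"
    using assms by (simp add: I_rate_eq)
  also have "\<dots> \<le> ((2 - d) * ln 2 + d * ln d) / 2"
    using assms by (intro divide_right_mono add_right_mono mult_left_mono) auto
  also have "\<dots> = ln 2 - d / 2 * ln (2 / d)"
    using assms by (simp add: ln_div field_simps)
  finally show ?thesis .
qed

lemma I_rate_le_ln2:
  assumes "0 \<le> t" "t \<le> 1"
  shows "I_rate t \<le> ln 2"
proof (cases "t = 1")
  case False
  then have "I_rate (1 - (1 - t)) \<le> ln 2 - (1 - t) / 2 * ln (2 / (1 - t))"
    using assms by (intro I_rate_one_minus_le) auto
  moreover have "0 \<le> (1 - t) / 2 * ln (2 / (1 - t))"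
    using assms False by simp
  ultimately show ?thesis by simp
qed simp

lemma I_rate_mono:
  assumes "0 \<le> a" "a \<le> b" "b \<le> 1"
  shows "I_rate a \<le> I_rate b"
proof (cases "b = 1")
  case True
  then show ?thesis using assms I_rate_le_ln2[of a] by simp
next
  case False
  show ?thesis
  proof (rule DERIV_nonneg_imp_nondecreasing[OF assms(2)])
    fix x assume "a \<le> x" "x \<le> b"
    then show "\<exists>y. (I_rate has_real_derivative y) (at x) \<and> 0 \<le> y"
      using assms False artanh_ge_self[of x] I_rate_has_real_derivative[of x] by force
  qed
qed

lemma I_rate_tendsto_ln2: "(I_rate \<longlongrightarrow> ln 2) (at_left 1)"
proof -
  have "eventually (\<lambda>t. ((1 + t) * ln (1 + t) + (1 - t) * ln (1 - t)) / 2 = I_rate t) (at_left 1)"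
    using eventually_at_left_real[OF zero_less_one] by eventually_elim (auto simp: I_rate_eq)
  moreover have "((\<lambda>t::real. ((1 + t) * ln (1 + t) + (1 - t) * ln (1 - t)) / 2) \<longlongrightarrow> ln 2) (at_left 1)"
    by real_asymp
  ultimately show ?thesis
    by (rule tendsto_cong[THEN iffD1])
qed

lemma I_rate_over_square_tendsto: "((\<lambda>t. I_rate t / t^2) \<longlongrightarrow> 1 / 2) (at_right 0)"
proof -
  have "eventually (\<lambda>t. ((1 + t) * ln (1 + t) + (1 - t) * ln (1 - t)) / 2 / t^2 = I_rate t / t^2) (at_right 0)"
    using eventually_at_right_real[OF zero_less_one] by eventually_elim (auto simp: I_rate_eq)
  moreover have "((\<lambda>t::real. ((1 + t) * ln (1 + t) + (1 - t) * ln (1 - t)) / 2 / t^2) \<longlongrightarrow> 1 / 2) (at_right 0)"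
    by real_asymp
  ultimately show ?thesis
    by (rule tendsto_cong[THEN iffD1])
qed

lemma I_rate_exceeds:
  assumes "a < ln 2"
  obtains t\<^sub>0 where "0 < t\<^sub>0" "t\<^sub>0 < 1" "a < I_rate t\<^sub>0"
proof -
  have "eventually (\<lambda>t. a < I_rate t \<and> t \<in> {0<..<1}) (at_left 1)"
    using order_tendstoD(1)[OF I_rate_tendsto_ln2 assms] eventually_at_left_real[OF zero_less_one]
    by (rule eventually_conj)
  then obtain t where "a < I_rate t \<and> t \<in> {0<..<1}"
    using eventually_happens'[OF trivial_limit_at_left_real] by blast
  then show ?thesis
    by (intro that) auto
qed

lemma I_rate_less_ln2_power: "\<exists>t\<in>{0..1}. I_rate t < ln 2 * t^p"
proof -
  \<comment> \<open>The witness is t = 1 - 4^-p; Bernoulli's inequality bounds (1 - d)^p from below.\<close>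
  define d :: real where "d = 1 / 2^(2*p)"
  have d: "0 < d" "d \<le> 1"
    unfolding d_def by auto
  have "ln (2 / d) = ln (2^(2*p + 1))"
    unfolding d_def by simp
  also have "\<dots> = (2*p + 1) * ln 2"
    by (rule ln_realpow)
  finally have "ln (2 / d) = (2*p + 1) * ln 2" .
  then have "I_rate (1 - d) \<le> ln 2 - d / 2 * ((2*p + 1) * ln 2)"
    using I_rate_one_minus_le[OF d] by simp
  also have "\<dots> < ln 2 * (1 + p * (-d))"
    using d by (simp add: algebra_simps)
  also have "\<dots> \<le> ln 2 * (1 - d)^p"
    using Bernoulli_inequality[of "-d" p] d by (intro mult_left_mono) auto
  finally show ?thesis
    using d by (intro bexI[of _ "1 - d"]) auto
qed

definition cw_admissible :: "nat \<Rightarrow> real \<Rightarrow> bool" where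
  "cw_admissible p \<beta> \<longleftrightarrow> 0 \<le> \<beta> \<and> (\<forall>t\<in>{0..1}. \<beta> * t^p \<le> I_rate t)"

lemma cw_admissible_0: "cw_admissible p 0"
  by (simp add: cw_admissible_def I_rate_nonneg)

lemma cw_admissible_le_ln2: "cw_admissible p \<beta> \<Longrightarrow> \<beta> \<le> ln 2"
  using I_rate_1 unfolding cw_admissible_def by (metis atLeastAtMost_iff mult_1_right order_refl
      power_one zero_le_one)

lemma SUP_rate_gap_eq_0_iff:
  assumes "p \<ge> 1" "0 \<le> \<beta>"
  shows "(SUP t\<in>{0..1}. \<beta> * t^p - I_rate t) = 0 \<longleftrightarrow> (\<forall>t\<in>{0..1}. \<beta> * t^p \<le> I_rate t)"
proof -
  have bdd: "bdd_above ((\<lambda>t. \<beta> * t^p - I_rate t) ` {0..1})"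
  proof (rule bdd_aboveI2)
    fix t :: real assume t: "t \<in> {0..1}"
    have "\<beta> * t^p \<le> \<beta> * 1"
      using t assms by (intro mult_left_mono power_le_one) auto
    then show "\<beta> * t^p - I_rate t \<le> \<beta>"
      using I_rate_nonneg[of t] t by simp
  qed
  have "\<beta> * 0^p - I_rate 0 \<le> (SUP t\<in>{0..1}. \<beta> * t^p - I_rate t)"
    by (rule cSUP_upper[OF _ bdd]) auto
  then have "0 \<le> (SUP t\<in>{0..1}. \<beta> * t^p - I_rate t)"
    using assms by (simp add: zero_power)
  then show ?thesis
    using cSUP_le_iff[OF _ bdd, of 0] by auto
qed

lemma beta_CW_eq_Sup:
  assumes "p \<ge> 1"
  shows "beta_CW p = Sup (Collect (cw_admissible p))"
proof -
  have "{\<beta>. 0 \<le> \<beta> \<and> (SUP t\<in>{0..1}. \<beta> * t^p - I_rate t) = 0} = Collect (cw_admissible p)"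
    using SUP_rate_gap_eq_0_iff[OF assms] by (auto simp: cw_admissible_def)
  then show ?thesis
    by (simp add: beta_CW_def)
qed

lemma beta_CW_ge:
  assumes "p \<ge> 1" "cw_admissible p \<beta>"
  shows "\<beta> \<le> beta_CW p"
proof -
  have "bdd_above (Collect (cw_admissible p))"
    by (rule bdd_aboveI[of _ "ln 2"]) (auto intro: cw_admissible_le_ln2)
  then show ?thesis
    unfolding beta_CW_eq_Sup[OF assms(1)] using assms(2) by (simp add: cSup_upper)
qed

lemma cw_admissible_beta_CW:
  assumes "p \<ge> 1"
  shows "cw_admissible p (beta_CW p)"
  unfolding cw_admissible_def
proof (intro conjI ballI)
  show "0 \<le> beta_CW p"
    using beta_CW_ge[OF assms cw_admissible_0] .
  fix t :: real assume t: "t \<in> {0..1}"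
  show "beta_CW p * t^p \<le> I_rate t"
  proof (cases "t = 0")
    case False
    then have "0 < t^p" using t by simp
    moreover have "beta_CW p \<le> I_rate t / t^p"
      unfolding beta_CW_eq_Sup[OF assms]
    proof (rule cSup_least)
      show "Collect (cw_admissible p) \<noteq> {}"
        using cw_admissible_0 by blast
      fix \<beta> assume "\<beta> \<in> Collect (cw_admissible p)"
      then show "\<beta> \<le> I_rate t / t^p"
        using t \<open>0 < t^p\<close> by (simp add: cw_admissible_def pos_le_divide_eq)
    qed
    ultimately show ?thesis by (simp add: pos_le_divide_eq)
  qed (use assms in \<open>simp add: zero_power\<close>)
qed

lemma cw_admissible_if_near_0:
  assumes "0 \<le> c" "0 \<le> t\<^sub>0" "t\<^sub>0 \<le> 1" "c \<le> I_rate t\<^sub>0"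
    and near_0: "\<And>t. 0 \<le> t \<Longrightarrow> t \<le> t\<^sub>0 \<Longrightarrow> c * t^p \<le> I_rate t"
  shows "cw_admissible p c"
  unfolding cw_admissible_def
proof (intro conjI ballI)
  fix t :: real assume t: "t \<in> {0..1}"
  show "c * t^p \<le> I_rate t"
  proof (cases "t \<le> t\<^sub>0")
    case False
    have "c * t^p \<le> c"
      using t assms by (simp add: mult_left_le power_le_one)
    also have "\<dots> \<le> I_rate t"
      using assms(4) I_rate_mono[of t\<^sub>0 t] assms(2) False t by simp
    finally show ?thesis .
  qed (use t near_0 in auto)
qed fact

lemma beta_CW_ge_half:
  assumes "p \<ge> 2"
  shows "1 / 2 \<le> beta_CW p"
proof (rule beta_CW_ge)
  show "cw_admissible p (1 / 2)"
    unfolding cw_admissible_def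
  proof (intro conjI ballI)
    fix t :: real assume t: "t \<in> {0..1}"
    then have "t^p \<le> t^2"
      using assms by (intro power_decreasing) auto
    then show "1 / 2 * t^p \<le> I_rate t"
      using I_rate_ge_half_square[of t] t by simp
  qed simp
qed (use assms in simp)

lemma beta_CW_less_ln2:
  assumes "p \<ge> 1"
  shows "beta_CW p < ln 2"
proof -
  obtain t where t: "t \<in> {0..1}" "I_rate t < ln 2 * t^p"
    using I_rate_less_ln2_power by blast
  moreover have "beta_CW p * t^p \<le> I_rate t"
    using cw_admissible_beta_CW[OF assms] t unfolding cw_admissible_def by blast
  ultimately have "beta_CW p * t^p < ln 2 * t^p"
    by linarith
  then show ?thesis
    by (rule mult_right_less_imp_less) (use t in simp)
qed

lemma beta_CW_2: "beta_CW 2 = 1 / 2"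
proof (rule antisym[OF _ beta_CW_ge_half])
  show "beta_CW 2 \<le> 1 / 2"
  proof (rule ccontr)
    assume "\<not> beta_CW 2 \<le> 1 / 2"
    then have less: "1 / 2 < beta_CW 2"
      by simp
    have "eventually (\<lambda>t. I_rate t / t^2 < beta_CW 2 \<and> t \<in> {0<..<1}) (at_right 0)"
      using order_tendstoD(2)[OF I_rate_over_square_tendsto less] eventually_at_right_real[OF zero_less_one]
      by (rule eventually_conj)
    then obtain t where "I_rate t / t^2 < beta_CW 2 \<and> t \<in> {0<..<1}"
      using eventually_happens'[OF trivial_limit_at_right_real] by blast
    then have t: "I_rate t < beta_CW 2 * t^2" "0 < t" "t < 1"
      by (auto simp: divide_less_eq)
    moreover have "beta_CW 2 * t^2 \<le> I_rate t"
      using cw_admissible_beta_CW[of 2] t unfolding cw_admissible_def by simp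
    ultimately show False
      by simp
  qed
qed simp

lemma beta_CW_less_Suc:
  assumes "p \<ge> 2"
  shows "beta_CW p < beta_CW (Suc p)"
proof -
  define m where "m = beta_CW p"
  have m: "1 / 2 \<le> m" "m < ln 2"
    unfolding m_def using assms beta_CW_ge_half beta_CW_less_ln2 by auto
  obtain t\<^sub>0 where t\<^sub>0: "0 < t\<^sub>0" "t\<^sub>0 < 1" "m < I_rate t\<^sub>0"
    using I_rate_exceeds[OF m(2)] by blast
  define c where "c = min (I_rate t\<^sub>0) (m / t\<^sub>0)"
  have "m < c"
    unfolding c_def using t\<^sub>0 m by (simp add: less_divide_eq)
  moreover have "cw_admissible (Suc p) c"
  proof (rule cw_admissible_if_near_0)
    fix t :: real assume t: "0 \<le> t" "t \<le> t\<^sub>0"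
    have "c * t^Suc p \<le> m / t\<^sub>0 * t^Suc p"
      unfolding c_def using t by (intro mult_right_mono) auto
    also have "\<dots> = m * t^p * (t / t\<^sub>0)"
      by simp
    also have "\<dots> \<le> m * t^p"
      using t t\<^sub>0 m by (intro mult_left_le) auto
    also have "\<dots> \<le> I_rate t"
      using cw_admissible_beta_CW[of p] assms t t\<^sub>0 unfolding cw_admissible_def m_def by simp
    finally show "c * t^Suc p \<le> I_rate t" .
  next
    show "0 \<le> c" "c \<le> I_rate t\<^sub>0"
      using \<open>m < c\<close> m unfolding c_def by auto
  qed (use t\<^sub>0 in auto)
  then have "c \<le> beta_CW (Suc p)"
    by (rule beta_CW_ge[rotated]) simp
  ultimately show ?thesis
    unfolding m_def by linarith
qed

lemma beta_CW_tendsto_ln2: "beta_CW \<longlonglongrightarrow> ln 2"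
proof (rule order_tendstoI)
  fix a :: real assume "a < ln 2"
  then obtain t\<^sub>0 where t\<^sub>0: "0 < t\<^sub>0" "t\<^sub>0 < 1" "a < I_rate t\<^sub>0"
    using I_rate_exceeds by blast
  obtain N where N: "t\<^sub>0^N < 1 / 2"
    using real_arch_pow_inv[of "1 / 2" t\<^sub>0] t\<^sub>0 by auto
  have "I_rate t\<^sub>0 \<le> beta_CW n" if n: "n \<ge> N + 2" for n
  proof (rule beta_CW_ge)
    show "cw_admissible n (I_rate t\<^sub>0)"
    proof (rule cw_admissible_if_near_0)
      fix t :: real assume t: "0 \<le> t" "t \<le> t\<^sub>0"
      have "t^(n - 2) \<le> t\<^sub>0^(n - 2)"
        using t by (intro power_mono) auto
      also have "\<dots> \<le> t\<^sub>0^N"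
        using t\<^sub>0 n by (intro power_decreasing) auto
      finally have "t^(n - 2) \<le> t\<^sub>0^N" .
      have "I_rate t\<^sub>0 * t^n \<le> t^n"
        using I_rate_le_ln2[of t\<^sub>0] I_rate_nonneg[of t\<^sub>0] ln_2_less_1 t t\<^sub>0
        by (intro mult_left_le_one_le) auto
      also have "\<dots> = t^(n - 2) * t^2"
        using n by (metis add.commute le_add2 le_add_diff_inverse2 le_trans power_add)
      also have "\<dots> \<le> 1 / 2 * t^2"
        using \<open>t^(n - 2) \<le> t\<^sub>0^N\<close> N by (intro mult_right_mono) auto
      also have "\<dots> \<le> I_rate t"
        using I_rate_ge_half_square[of t] t t\<^sub>0 by simp
      finally show "I_rate t\<^sub>0 * t^n \<le> I_rate t" .
    qed (use t\<^sub>0 I_rate_nonneg in auto)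
  qed (use n in simp)
  then show "eventually (\<lambda>n. a < beta_CW n) sequentially"
    using t\<^sub>0(3) by (intro eventually_sequentiallyI[of "N + 2"]) fastforce
next
  fix a :: real assume "ln 2 < a"
  then show "eventually (\<lambda>n. beta_CW n < a) sequentially"
    using beta_CW_less_ln2 by (intro eventually_sequentiallyI[of 1]) fastforce
qed

theorem mainTheorem20:
  shows "(beta_CW \<longlonglongrightarrow> ln 2)
     \<and> (\<forall>p::nat. p \<ge> 2 \<longrightarrow> beta_CW p < beta_CW (Suc p))
     \<and> beta_CW 2 = 1 / 2"
  using beta_CW_tendsto_ln2 beta_CW_less_Suc beta_CW_2 by blast

end
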